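(* For every $n\ge 2$, the compact set $\widetilde\Gamma_n\subset\mathbb C^n$ is polynomially convex.
   Context: $\mathbb D$ is the open unit disc. $\widetilde{\mathbb G}_n=\{(y_1,\dots,y_{n-1},q)\in\mathbb C^n: q\in\mathbb D,\ y_j=\beta_j+\bar\beta_{n-j}q$ for some $\beta_j\in\mathbb C$ with $|\beta_j|+|\beta_{n-j}|<\binom{n}{j}$, $j=1,\dots,n-1\}$; $\widetilde\Gamma_n$ is its closure. A compact $K\subset\mathbb C^n$ is polynomially convex if for every $y\in\mathbb C^n\setminus K$ there is a polynomial $P$ in $n$ variables with $|P(y)|>\sup_{z\in K}|P(z)|$. *)

theory Defs
  imports "HOL-Analysis.Analysis"
begin

text \<open>Points of C^n are modelled as functions z :: nat \<Rightarrow> complex supported on {1..n};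
  coordinates z 1, ..., z (n-1) are y_1, ..., y_(n-1) and z n is q.
  The topology is the product topology on nat \<Rightarrow> complex, which on this
  finite-dimensional carrier is the Euclidean topology of C^n.\<close>

definition Cn :: "nat \<Rightarrow> (nat \<Rightarrow> complex) set" where
  "Cn n = {z. \<forall>j. (j = 0 \<or> n < j) \<longrightarrow> z j = 0}"

definition G_tilde :: "nat \<Rightarrow> (nat \<Rightarrow> complex) set" where
  "G_tilde n = {z. z \<in> Cn n \<and> norm (z n) < 1 \<and>
     (\<exists>\<beta> :: nat \<Rightarrow> complex. \<forall>j\<in>{1..n-1}.
        z j = \<beta> j + cnj (\<beta> (n - j)) * z n \<and>
        norm (\<beta> j) + norm (\<beta> (n - j)) < real (n choose j))}"

definition Gamma_tilde :: "nat \<Rightarrow> (nat \<Rightarrow> complex) set" where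
  "Gamma_tilde n = closure (G_tilde n)"

inductive_set poly_fun :: "nat \<Rightarrow> ((nat \<Rightarrow> complex) \<Rightarrow> complex) set" for n :: nat where
  const: "(\<lambda>z. c) \<in> poly_fun n"
| var: "j \<in> {1..n} \<Longrightarrow> (\<lambda>z. z j) \<in> poly_fun n"
| add: "P \<in> poly_fun n \<Longrightarrow> Q \<in> poly_fun n \<Longrightarrow> (\<lambda>z. P z + Q z) \<in> poly_fun n"
| mult: "P \<in> poly_fun n \<Longrightarrow> Q \<in> poly_fun n \<Longrightarrow> (\<lambda>z. P z * Q z) \<in> poly_fun n"

definition polynomially_convex :: "nat \<Rightarrow> (nat \<Rightarrow> complex) set \<Rightarrow> bool" where
  "polynomially_convex n K \<longleftrightarrow> K \<subseteq> Cn n \<and> compact K \<and>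
     (\<forall>y \<in> Cn n - K. \<exists>P \<in> poly_fun n. norm (P y) > (SUP z\<in>K. norm (P z)))"

end

theory Submission
  imports Defs "HOL-Complex_Analysis.Complex_Analysis"
begin

text \<open>Write \<open>q = y\<^sub>n\<close> and \<open>C = C(n,j)\<close>. For \<open>|q| < 1\<close>, a point \<open>y\<close> is a limit of points
  of \<open>G_tilde n\<close> exactly when every normalised pair \<open>x\<^sub>1 = y\<^sub>j / C\<close>, \<open>x\<^sub>2 = y\<^sub>n\<^sub>-\<^sub>j / C\<close> satisfies
  \<open>|q z - x\<^sub>1| \<le> |1 - x\<^sub>2 z|\<close> on the unit disc. One direction is the maximum modulus
  principle for \<open>(q z - x\<^sub>1) / (1 - x\<^sub>2 z)\<close>; for the other, an identity of Schur type on the unit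
  circle shows that the coefficients \<open>\<beta>\<^sub>j = (y\<^sub>j - cnj y\<^sub>n\<^sub>-\<^sub>j q) / (1 - |q|\<^sup>2)\<close> satisfy
  \<open>|\<beta>\<^sub>j| + |\<beta>\<^sub>n\<^sub>-\<^sub>j| \<le> C\<close>. Scaling takes care of \<open>|q| = 1\<close>, so \<open>Gamma_tilde n\<close> is cut out by
  \<open>|q| \<le> 1\<close> and these inequalities.

  A point outside \<open>Gamma_tilde n\<close> then has \<open>|q| > 1\<close>, or some \<open>|y\<^sub>j| > C\<close>, or violates one of the
  inequalities at some \<open>z\<close>. In the first two cases a coordinate separates it; in the last, a
  truncated geometric series expansion of \<open>(q z - y\<^sub>j / C) / (1 - y\<^sub>n\<^sub>-\<^sub>j z / C)\<close>, which has
  modulus at most 1 on \<open>Gamma_tilde n\<close>, is a separating polynomial.\<close>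

definition disc_dominated :: "complex \<Rightarrow> complex \<Rightarrow> complex \<Rightarrow> bool" where
  "disc_dominated q x1 x2 \<longleftrightarrow> (\<forall>z. norm z < 1 \<longrightarrow> norm (q * z - x1) \<le> norm (1 - x2 * z))"

lemma one_minus_norm_sq_pos:
  fixes q :: complex
  assumes "norm q < 1"
  shows "0 < 1 - (norm q)^2"
  using assms by (simp add: power_less_one_iff)

lemma schur_identity:
  fixes x1 x2 q w :: complex
  assumes "norm w = 1"
  shows "(1 - (norm q)^2) * ((norm (1 - x2*w))^2 - (norm (q*w - x1))^2) =
     (norm (complex_of_real (1 - (norm q)^2) - (x2 - cnj x1 * q) * w))^2 - (norm (x1 - cnj x2 * q))^2"
proof -
  have ww: "w * cnj w = 1" using assms complex_norm_square[of w] by simp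
  have e: "\<And>z. complex_of_real ((norm z)^2) = z * cnj z" by (rule complex_norm_square)
  have "complex_of_real ((1 - (norm q)^2) * ((norm (1 - x2*w))^2 - (norm (q*w - x1))^2)) =
        complex_of_real ((norm (complex_of_real (1 - (norm q)^2) - (x2 - cnj x1 * q) * w))^2
          - (norm (x1 - cnj x2 * q))^2)"
    unfolding of_real_mult of_real_diff e of_real_1
    using ww by (simp add: algebra_simps) algebra
  then show ?thesis using of_real_eq_iff by blast
qed

lemma disc_dominated_on_circle:
  assumes "disc_dominated q x1 x2" and "norm w = 1"
  shows "norm (q * w - x1) \<le> norm (1 - x2 * w)"
proof -
  have "closure (ball 0 1) \<subseteq> {z. norm (q * z - x1) \<le> norm (1 - x2 * z)}"
    using assms(1) unfolding disc_dominated_def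
    by (intro closure_minimal closed_Collect_le continuous_intros) auto
  moreover have "w \<in> closure (ball 0 1)" using assms(2) by simp
  ultimately show ?thesis by blast
qed

lemma circle_ineq_imp_coeff_bound:
  fixes x1 x2 q :: complex
  assumes q: "norm q < 1"
    and circle: "\<And>w. norm w = 1 \<Longrightarrow> norm (q*w - x1) \<le> norm (1 - x2*w)"
  shows "norm (x1 - cnj x2 * q) \<le> \<bar>(1 - (norm q)^2) - norm (x2 - cnj x1 * q)\<bar>"
proof -
  define V where "V = x2 - cnj x1 * q"
  define \<rho> where "\<rho> = 1 - (norm q)^2"
  have \<rho>: "\<rho> > 0" unfolding \<rho>_def using one_minus_norm_sq_pos[OF q] .
  \<comment> \<open>the point of the circle where the right-hand side of the identity is smallest\<close>
  define w where "w = (if V = 0 then 1 else cnj V / of_real (norm V))"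
  have w: "norm w = 1"
  proof (cases "V = 0")
    case False
    then show ?thesis unfolding w_def by (simp add: norm_divide)
  qed (simp add: w_def)
  have Vw: "V * w = of_real (norm V)"
  proof (cases "V = 0")
    case False
    have "V * w = (V * cnj V) / of_real (norm V)" using False unfolding w_def by simp
    also have "\<dots> = of_real ((norm V)^2) / of_real (norm V)" by (simp only: complex_norm_square)
    also have "\<dots> = of_real (norm V)" using False by (simp add: power2_eq_square)
    finally show ?thesis .
  qed (simp add: w_def)
  have "(norm (q*w - x1))^2 \<le> (norm (1 - x2*w))^2" using circle[OF w] by (simp add: power_mono)
  then have "0 \<le> \<rho> * ((norm (1 - x2*w))^2 - (norm (q*w - x1))^2)" using \<rho> by simp
  also have "\<dots> = (norm (complex_of_real \<rho> - V * w))^2 - (norm (x1 - cnj x2 * q))^2"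
    unfolding \<rho>_def V_def by (rule schur_identity[OF w])
  finally have "(norm (x1 - cnj x2 * q))^2 \<le> (norm (complex_of_real \<rho> - V * w))^2" by simp
  then have "norm (x1 - cnj x2 * q) \<le> norm (complex_of_real \<rho> - V * w)"
    by (rule power2_le_imp_le) simp
  also have "\<dots> = \<bar>\<rho> - norm V\<bar>" unfolding Vw
    by (metis norm_of_real of_real_diff)
  finally show ?thesis unfolding \<rho>_def V_def .
qed

lemma disc_dominated_imp_coeff_sum_bound:
  fixes x1 x2 q :: complex
  assumes q: "norm q < 1" and "disc_dominated q x1 x2" and "disc_dominated q x2 x1"
  shows "norm (x1 - cnj x2 * q) + norm (x2 - cnj x1 * q) \<le> 1 - (norm q)^2"
proof -
  have "norm (x1 - cnj x2 * q) \<le> \<bar>(1 - (norm q)^2) - norm (x2 - cnj x1 * q)\<bar>"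
    "norm (x2 - cnj x1 * q) \<le> \<bar>(1 - (norm q)^2) - norm (x1 - cnj x2 * q)\<bar>"
    using circle_ineq_imp_coeff_bound[OF q] disc_dominated_on_circle[OF assms(2)]
      disc_dominated_on_circle[OF assms(3)] by simp_all
  then show ?thesis using one_minus_norm_sq_pos[OF q] by linarith
qed

lemma coeff_decomposition:
  fixes x1 x2 q :: complex
  assumes q: "norm q < 1"
  defines "\<rho> \<equiv> complex_of_real (1 - (norm q)^2)"
  shows "x1 = (x1 - cnj x2 * q) / \<rho> + cnj ((x2 - cnj x1 * q) / \<rho>) * q"
proof -
  have "\<rho> \<noteq> 0"
    unfolding \<rho>_def of_real_eq_0_iff using one_minus_norm_sq_pos[OF q] by linarith
  moreover have "cnj \<rho> = \<rho>" unfolding \<rho>_def by simp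
  ultimately have \<rho>: "\<rho> \<noteq> 0" "cnj \<rho> = \<rho>" by auto
  have "(x1 - cnj x2 * q) + cnj (x2 - cnj x1 * q) * q = x1 * (1 - q * cnj q)"
    by (simp add: algebra_simps)
  also have "1 - q * cnj q = \<rho>"
    unfolding \<rho>_def using complex_norm_square[of q] by simp
  finally show ?thesis using \<rho> by (simp add: field_simps)
qed

lemma circle_ineq_from_coeffs:
  fixes b1 b2 q w :: complex
  assumes b: "norm b1 + norm b2 < 1" and q: "norm q < 1" and w: "norm w = 1"
  shows "norm (q*w - (b1 + cnj b2 * q)) \<le> norm (1 - (b2 + cnj b1 * q)*w)"
proof -
  define x1 where "x1 = b1 + cnj b2 * q"
  define x2 where "x2 = b2 + cnj b1 * q"
  define \<rho> where "\<rho> = 1 - (norm q)^2"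
  have \<rho>: "\<rho> > 0" unfolding \<rho>_def using one_minus_norm_sq_pos[OF q] .
  have qq: "q * cnj q = of_real ((norm q)^2)" using complex_norm_square[of q] by simp
  have U: "x1 - cnj x2 * q = of_real \<rho> * b1" and V: "x2 - cnj x1 * q = of_real \<rho> * b2"
    unfolding x1_def x2_def \<rho>_def of_real_diff qq[symmetric] by (simp_all add: algebra_simps)
  have "norm b1 < 1 - norm b2" using b by linarith
  also have "\<dots> \<le> norm (1 - b2*w)"
    using norm_triangle_ineq2[of 1 "b2*w"] w by (simp add: norm_mult)
  finally have "norm (of_real \<rho> * b1) \<le> norm (of_real \<rho> * (1 - b2*w))"
    using \<rho> by (simp add: norm_mult)
  moreover have "of_real \<rho> * (1 - b2*w) = complex_of_real \<rho> - of_real \<rho> * b2 * w"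
    by (simp add: algebra_simps)
  ultimately have "0 \<le> (norm (complex_of_real \<rho> - of_real \<rho> * b2 * w))^2 - (norm (of_real \<rho> * b1))^2"
    by (simp add: power_mono)
  also have "\<dots> = \<rho> * ((norm (1 - x2*w))^2 - (norm (q*w - x1))^2)"
    using schur_identity[OF w, of q x2 x1] unfolding U V \<rho>_def by (simp add: mult.assoc)
  finally have "(norm (q*w - x1))^2 \<le> (norm (1 - x2*w))^2"
    using \<rho> by (simp add: zero_le_mult_iff)
  then show ?thesis unfolding x1_def x2_def by (rule power2_le_imp_le) simp
qed

lemma disc_dominated_of_coeffs:
  fixes b1 b2 q :: complex
  assumes b: "norm b1 + norm b2 < 1" and q: "norm q < 1"
  shows "disc_dominated q (b1 + cnj b2 * q) (b2 + cnj b1 * q)"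
  unfolding disc_dominated_def
proof (intro allI impI)
  fix z :: complex assume z: "norm z < 1"
  define x1 where "x1 = b1 + cnj b2 * q"
  define x2 where "x2 = b2 + cnj b1 * q"
  have "norm x2 \<le> norm b2 + norm b1 * norm q"
    unfolding x2_def using norm_triangle_ineq[of b2 "cnj b1 * q"] by (simp add: norm_mult)
  also have "\<dots> \<le> norm b2 + norm b1" using q by (simp add: mult_left_le)
  finally have x2: "norm x2 < 1" using b by linarith
  have D: "1 - x2 * u \<noteq> 0" if "norm u \<le> 1" for u
  proof -
    have "norm (x2 * u) \<le> norm x2" using that by (simp add: norm_mult mult_left_le)
    then have "norm (x2 * u) < 1" using x2 by linarith
    then show ?thesis by auto
  qed
  have "norm ((q*z - x1) / (1 - x2*z)) \<le> 1"
  proof (rule maximum_modulus_frontier[where S = "cball 0 1" and f = "\<lambda>u. (q*u - x1) / (1 - x2*u)"])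
    show "(\<lambda>u. (q*u - x1) / (1 - x2*u)) holomorphic_on interior (cball 0 1)"
      using D by (intro holomorphic_intros) auto
    show "continuous_on (closure (cball 0 1)) (\<lambda>u. (q*u - x1) / (1 - x2*u))"
      using D by (intro continuous_intros) auto
    fix u :: complex assume "u \<in> frontier (cball 0 1)"
    then have u: "norm u = 1" by simp
    show "norm ((q*u - x1) / (1 - x2*u)) \<le> 1"
      using circle_ineq_from_coeffs[OF b q u] D[of u] u
      unfolding x1_def x2_def by (simp add: norm_divide divide_le_eq_1)
  qed (use z in auto)
  then show "norm (q * z - x1) \<le> norm (1 - x2 * z)"
    using D[of z] z by (simp add: norm_divide divide_le_eq_1)
qed

lemma continuous_on_coordinate [continuous_intros]:
  "continuous_on S (\<lambda>x::'a \<Rightarrow> 'b::topological_space. x i)"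
  by (rule continuous_on_subset[OF continuous_on_product_coordinates]) simp

lemma norm_of_real_mult_le:
  fixes z :: "'a::real_normed_div_algebra"
  assumes "0 \<le> t" "t \<le> 1"
  shows "norm (of_real t * z) \<le> norm z"
  using assms by (simp add: norm_mult mult_left_le_one_le)

lemma path_end_in_closure:
  fixes g :: "real \<Rightarrow> 'a::topological_space"
  assumes "continuous_on UNIV g" and "\<And>t. 0 < t \<Longrightarrow> t < 1 \<Longrightarrow> g t \<in> A"
  shows "g 1 \<in> closure A"
proof (rule Lim_in_closed_set[of "closure A" g "at_left 1"])
  have "eventually (\<lambda>t. t \<in> {0<..<1}) (at_left (1::real))"
    by (rule eventually_at_left_real) simp
  then show "eventually (\<lambda>t. g t \<in> closure A) (at_left 1)"
    by (rule eventually_mono) (use assms(2) closure_subset in auto)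
  show "(g \<longlongrightarrow> g 1) (at_left 1)"
    using assms(1) by (metis UNIV_I continuous_on_def tendsto_within_subset subset_UNIV)
qed simp_all

lemma closed_Cn: "closed (Cn n)"
proof -
  have "Cn n = (\<Inter>j\<in>{j. j = 0 \<or> n < j}. {z. z j = 0})" unfolding Cn_def by auto
  then show ?thesis by (simp add: closed_INT closed_Collect_eq continuous_intros)
qed

lemma zero_in_G_tilde: "(\<lambda>_. 0) \<in> G_tilde n"
  unfolding G_tilde_def Cn_def by (auto intro!: exI[of _ "\<lambda>_. 0"] simp: zero_less_binomial)

definition Gamma_cond :: "nat \<Rightarrow> (nat \<Rightarrow> complex) \<Rightarrow> bool" where
  "Gamma_cond n y \<longleftrightarrow> norm (y n) \<le> 1 \<and>
     (\<forall>j\<in>{1..n-1}. disc_dominated (y n) (y j / of_nat (n choose j)) (y (n - j) / of_nat (n choose j)))"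

lemma complement_index:
  assumes "j \<in> {1..n-1}"
  shows "n - j \<in> {1..n-1}" "n - (n - j) = j" "n choose (n - j) = n choose j"
    "j \<noteq> n" "n - j \<noteq> n" "0 < n choose j"
  using assms binomial_symmetric[of j n] zero_less_binomial[of j n] by auto

lemma Gamma_cond_coord_bound:
  assumes "Gamma_cond n y" and j: "j \<in> {1..n-1}"
  shows "norm (y j) \<le> real (n choose j)"
proof -
  have "disc_dominated (y n) (y j / of_nat (n choose j)) (y (n - j) / of_nat (n choose j))"
    using assms unfolding Gamma_cond_def by blast
  then have "norm (y j / of_nat (n choose j)) \<le> 1"
    unfolding disc_dominated_def by (auto dest: spec[of _ 0])
  then show ?thesis using complement_index(6)[OF j] by (simp add: norm_divide divide_le_eq)
qed

lemma closed_Gamma_cond: "closed {y. Gamma_cond n y}"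
proof -
  have "{y. Gamma_cond n y} = {y. norm (y n) \<le> 1} \<inter> (\<Inter>j\<in>{1..n-1}. \<Inter>z\<in>ball 0 1.
     {y. norm (y n * z - y j / of_nat (n choose j)) \<le> norm (1 - y (n - j) / of_nat (n choose j) * z)})"
    unfolding Gamma_cond_def disc_dominated_def by auto
  moreover have "closed \<dots>"
    by (intro closed_Int closed_INT ballI closed_Collect_le continuous_intros)
      (auto simp: binomial_eq_0_iff)
  ultimately show ?thesis by simp
qed

lemma Gamma_cond_if_G_tilde:
  assumes "y \<in> G_tilde n"
  shows "Gamma_cond n y"
proof -
  obtain \<beta> where q: "norm (y n) < 1" and \<beta>: "\<forall>j\<in>{1..n-1}. y j = \<beta> j + cnj (\<beta> (n - j)) * y n \<and>
      norm (\<beta> j) + norm (\<beta> (n - j)) < real (n choose j)"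
    using assms unfolding G_tilde_def by blast
  have "disc_dominated (y n) (y j / of_nat (n choose j)) (y (n - j) / of_nat (n choose j))"
    if j: "j \<in> {1..n-1}" for j
  proof -
    note J = complement_index[OF j]
    define c :: complex where "c = of_nat (n choose j)"
    have c: "norm c = real (n choose j)" "c \<noteq> 0" "cnj c = c" using J(6) by (auto simp: c_def)
    have "norm (\<beta> j / c) + norm (\<beta> (n - j) / c) < 1"
      using \<beta> j c J(6) by (simp add: norm_divide add_divide_distrib[symmetric])
    moreover have "y j / c = \<beta> j / c + cnj (\<beta> (n - j) / c) * y n"
      "y (n - j) / c = \<beta> (n - j) / c + cnj (\<beta> j / c) * y n"
      using \<beta> j J(1,2) c by (auto simp: field_simps)
    ultimately show ?thesis unfolding c_def by (metis disc_dominated_of_coeffs q)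
  qed
  then show ?thesis using q by (simp add: Gamma_cond_def)
qed

definition Gamma_coeff :: "nat \<Rightarrow> (nat \<Rightarrow> complex) \<Rightarrow> nat \<Rightarrow> complex" where
  "Gamma_coeff n y j = (y j - cnj (y (n - j)) * y n) / of_real (1 - (norm (y n))^2)"

lemma Gamma_coeff_decomposition:
  assumes q: "norm (y n) < 1" and j: "j \<in> {1..n-1}"
  shows "y j = Gamma_coeff n y j + cnj (Gamma_coeff n y (n - j)) * y n"
  using coeff_decomposition[OF q, of "y j" "y (n - j)"] complement_index(2)[OF j]
  unfolding Gamma_coeff_def by simp

lemma Gamma_coeff_bound:
  assumes y: "Gamma_cond n y" and q: "norm (y n) < 1" and j: "j \<in> {1..n-1}"
  shows "norm (Gamma_coeff n y j) + norm (Gamma_coeff n y (n - j)) \<le> real (n choose j)"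
proof -
  note J = complement_index[OF j]
  define \<rho> where "\<rho> = complex_of_real (1 - (norm (y n))^2)"
  have "norm \<rho> = 1 - (norm (y n))^2"
    unfolding \<rho>_def norm_of_real using one_minus_norm_sq_pos[OF q] by simp
  then have \<rho>: "\<rho> \<noteq> 0" "norm \<rho> = 1 - (norm (y n))^2"
    using one_minus_norm_sq_pos[OF q] by auto
  define c :: complex where "c = of_nat (n choose j)"
  have c: "norm c = real (n choose j)" "c \<noteq> 0" "cnj c = c" using J(6) by (auto simp: c_def)
  have dom: "disc_dominated (y n) (y j / c) (y (n - j) / c)"
    "disc_dominated (y n) (y (n - j) / c) (y j / c)"
    using y j J(1,2,3) unfolding Gamma_cond_def c_def by (metis, metis)
  have "Gamma_coeff n y j = c * (y j / c - cnj (y (n - j) / c) * y n) / \<rho>"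
    "Gamma_coeff n y (n - j) = c * (y (n - j) / c - cnj (y j / c) * y n) / \<rho>"
    unfolding Gamma_coeff_def \<rho>_def[symmetric] J(2) using c \<rho>(1) by (simp_all add: field_simps)
  then have "norm (Gamma_coeff n y j) + norm (Gamma_coeff n y (n - j)) = real (n choose j) *
      (norm (y j / c - cnj (y (n - j) / c) * y n) + norm (y (n - j) / c - cnj (y j / c) * y n)) / norm \<rho>"
    by (simp add: norm_mult norm_divide c distrib_left add_divide_distrib)
  also have "\<dots> \<le> real (n choose j) * norm \<rho> / norm \<rho>"
    unfolding \<rho>(2) using disc_dominated_imp_coeff_sum_bound[OF q dom] one_minus_norm_sq_pos[OF q]
    by (intro divide_right_mono mult_left_mono) simp_all
  finally show ?thesis using \<rho>(1) by simp
qed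

lemma closure_G_tilde_if_Gamma_cond_interior:
  assumes y: "y \<in> Cn n" "Gamma_cond n y" and q: "norm (y n) < 1"
  shows "y \<in> closure (G_tilde n)"
proof -
  define \<beta> where "\<beta> = Gamma_coeff n y"
  \<comment> \<open>\<open>g t\<close> has coefficients \<open>t \<beta>\<close>, which satisfy the strict bounds of \<open>G_tilde\<close>\<close>
  define g where "g t i = (if i = n then y i else of_real t * y i)" for t :: real and i
  have inside: "g t \<in> G_tilde n" if t: "0 < t" "t < 1" for t
  proof -
    have "g t j = of_real t * \<beta> j + cnj (of_real t * \<beta> (n - j)) * g t n \<and>
        norm (of_real t * \<beta> j) + norm (of_real t * \<beta> (n - j)) < real (n choose j)"
      if j: "j \<in> {1..n-1}" for j
    proof
      show "g t j = of_real t * \<beta> j + cnj (of_real t * \<beta> (n - j)) * g t n"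
        unfolding g_def \<beta>_def using complement_index(4)[OF j] Gamma_coeff_decomposition[of y n j, OF q j]
        by (simp add: algebra_simps)
      have "norm (of_real t * \<beta> j) + norm (of_real t * \<beta> (n - j)) = t * (norm (\<beta> j) + norm (\<beta> (n - j)))"
        using t by (simp add: norm_mult algebra_simps)
      also have "\<dots> \<le> t * real (n choose j)" using Gamma_coeff_bound[OF y(2) q j] t by (simp add: \<beta>_def)
      also have "\<dots> < real (n choose j)" using t complement_index(6)[OF j] by simp
      finally show "norm (of_real t * \<beta> j) + norm (of_real t * \<beta> (n - j)) < real (n choose j)" .
    qed
    moreover have "g t \<in> Cn n" using y(1) unfolding Cn_def g_def by auto
    ultimately show ?thesis using q unfolding G_tilde_def g_def by (auto intro!: exI[of _ "\<lambda>j. of_real t * \<beta> j"])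
  qed
  have "continuous_on UNIV g"
  proof (intro continuous_on_coordinatewise_then_product)
    show "continuous_on UNIV (\<lambda>t. g t i)" for i
      unfolding g_def by (cases "i = n") (auto intro!: continuous_intros)
  qed
  from path_end_in_closure[OF this inside] have "g 1 \<in> closure (G_tilde n)" .
  moreover have "g 1 = y" unfolding g_def by auto
  ultimately show ?thesis by simp
qed

lemma closure_G_tilde_if_Gamma_cond:
  assumes y: "y \<in> Cn n" "Gamma_cond n y"
  shows "y \<in> closure (G_tilde n)"
proof -
  \<comment> \<open>\<open>y\<^sub>j \<mapsto> t y\<^sub>j, q \<mapsto> t\<^sup>2 q\<close> preserves the condition and moves \<open>q\<close> into the open disc\<close>
  define h where "h t i = (if i = n then of_real (t^2) * y i else of_real t * y i)" for t :: real and i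
  have inside: "h t \<in> closure (G_tilde n)" if t: "0 < t" "t < 1" for t
  proof (rule closure_G_tilde_if_Gamma_cond_interior)
    show "h t \<in> Cn n" using y(1) unfolding Cn_def h_def by auto
    have q: "norm (y n) \<le> 1" using y(2) unfolding Gamma_cond_def by simp
    have "norm (h t n) = t^2 * norm (y n)" unfolding h_def using t by (simp add: norm_mult norm_power)
    also have "\<dots> \<le> t^2" using q by (simp add: mult_left_le)
    also have "\<dots> < 1" using t by (simp add: power_less_one_iff)
    finally show hq: "norm (h t n) < 1" .
    have "disc_dominated (h t n) (h t j / of_nat (n choose j)) (h t (n - j) / of_nat (n choose j))"
      if j: "j \<in> {1..n-1}" for j
      unfolding disc_dominated_def
    proof (intro allI impI)
      fix z :: complex assume z: "norm z < 1"
      define c :: complex where "c = of_nat (n choose j)"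
      have tz: "norm (of_real t * z) < 1"
        using norm_of_real_mult_le[of t z] t z by linarith
      have "h t n * z - h t j / c = of_real t * (y n * (of_real t * z) - y j / c)"
        "1 - h t (n - j) / c * z = 1 - y (n - j) / c * (of_real t * z)"
        unfolding h_def using complement_index(4,5)[OF j]
        by (simp_all add: algebra_simps power2_eq_square)
      moreover have "norm (y n * (of_real t * z) - y j / c) \<le> norm (1 - y (n - j) / c * (of_real t * z))"
        using y(2) j tz unfolding Gamma_cond_def disc_dominated_def c_def by blast
      ultimately show "norm (h t n * z - h t j / of_nat (n choose j)) \<le>
          norm (1 - h t (n - j) / of_nat (n choose j) * z)"
        using norm_of_real_mult_le[of t] t unfolding c_def[symmetric] by (metis order_trans less_imp_le)
    qed
    then show "Gamma_cond n (h t)" using hq by (simp add: Gamma_cond_def)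
  qed
  have "continuous_on UNIV h"
  proof (intro continuous_on_coordinatewise_then_product)
    show "continuous_on UNIV (\<lambda>t. h t i)" for i
      unfolding h_def by (cases "i = n") (auto intro!: continuous_intros)
  qed
  from path_end_in_closure[OF this inside] have "h 1 \<in> closure (G_tilde n)" by simp
  moreover have "h 1 = y" unfolding h_def by auto
  ultimately show ?thesis by simp
qed

lemma Gamma_tilde_eq: "Gamma_tilde n = Cn n \<inter> {y. Gamma_cond n y}"
proof
  have "G_tilde n \<subseteq> Cn n \<inter> {y. Gamma_cond n y}"
    using Gamma_cond_if_G_tilde by (auto simp: G_tilde_def)
  then show "Gamma_tilde n \<subseteq> Cn n \<inter> {y. Gamma_cond n y}"
    unfolding Gamma_tilde_def by (intro closure_minimal closed_Int closed_Cn closed_Gamma_cond)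
  show "Cn n \<inter> {y. Gamma_cond n y} \<subseteq> Gamma_tilde n"
    unfolding Gamma_tilde_def using closure_G_tilde_if_Gamma_cond by blast
qed

lemma compact_Gamma_tilde: "compact (Gamma_tilde n)"
proof -
  define B where "B = PiE UNIV (\<lambda>i::nat. cball (0::complex) (2^n))"
  have "compactin (product_topology (\<lambda>i. euclidean) UNIV) B"
    unfolding B_def by (simp add: compactin_PiE)
  then have "compact B" by (simp add: euclidean_product_topology)
  moreover have "Gamma_tilde n \<subseteq> B"
  proof
    fix y assume "y \<in> Gamma_tilde n"
    then have y: "y \<in> Cn n" "Gamma_cond n y" by (auto simp: Gamma_tilde_eq)
    have "norm (y i) \<le> 2^n" for i
    proof (cases "i \<in> {1..n-1}")
      case True
      have "real (n choose i) \<le> 2^n"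
        using binomial_le_pow2[of n i] by (metis of_nat_le_iff of_nat_numeral of_nat_power)
      then show ?thesis using Gamma_cond_coord_bound[OF y(2) True] by linarith
    next
      case False
      then have "i = 0 \<or> n < i \<or> i = n" by auto
      then have "i = n \<or> y i = 0" using y(1) unfolding Cn_def by blast
      moreover have "norm (y n) \<le> 2^n"
        using y(2) order_trans[OF _ one_le_power[of "2::real" n]] unfolding Gamma_cond_def by simp
      ultimately show ?thesis by auto
    qed
    then show "y \<in> B" unfolding B_def by (simp add: PiE_UNIV_domain)
  qed
  ultimately show ?thesis unfolding Gamma_tilde_def
    by (metis closed_closure compact_Int_closed inf.absorb_iff2)
qed

lemma poly_fun_diff:
  assumes "P \<in> poly_fun n" "Q \<in> poly_fun n"
  shows "(\<lambda>w. P w - Q w) \<in> poly_fun n"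
proof -
  have "(\<lambda>w. P w + (\<lambda>_. -1) w * Q w) \<in> poly_fun n"
    by (intro poly_fun.add poly_fun.mult poly_fun.const assms)
  then show ?thesis by simp
qed

lemma poly_fun_divide_const: "P \<in> poly_fun n \<Longrightarrow> (\<lambda>w. P w / c) \<in> poly_fun n"
  using poly_fun.mult[OF _ poly_fun.const, of P n "inverse c"] by (simp add: divide_inverse)

lemma poly_fun_power: "P \<in> poly_fun n \<Longrightarrow> (\<lambda>w. P w ^ k) \<in> poly_fun n"
proof (induction k)
  case 0
  then show ?case using poly_fun.const[of 1 n] by simp
next
  case (Suc k)
  then show ?case using poly_fun.mult[OF Suc.prems Suc.IH] by simp
qed

lemma poly_fun_sum:
  "finite A \<Longrightarrow> (\<And>k. k \<in> A \<Longrightarrow> F k \<in> poly_fun n) \<Longrightarrow> (\<lambda>w. \<Sum>k\<in>A. F k w) \<in> poly_fun n"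
proof (induction A rule: finite_induct)
  case empty
  then show ?case using poly_fun.const[of 0 n] by simp
next
  case (insert x A)
  then show ?case using poly_fun.add[of "F x" n] by simp
qed

lemma norm_geometric_sum_mult_bounds:
  fixes a :: complex
  assumes "norm a \<le> s" "s < 1"
  shows "norm (\<Sum>k<N. a^k) * norm (1 - a) \<le> 1 + s^N"
    and "1 - s^N \<le> norm (\<Sum>k<N. a^k) * norm (1 - a)"
proof -
  have "a \<noteq> 1" using assms by auto
  then have e: "norm (\<Sum>k<N. a^k) * norm (1 - a) = norm (1 - a^N)"
    by (simp add: sum_gp_strict norm_divide)
  have "norm (a^N) \<le> s^N" using assms by (simp add: norm_power power_mono)
  then show "norm (\<Sum>k<N. a^k) * norm (1 - a) \<le> 1 + s^N"
    and "1 - s^N \<le> norm (\<Sum>k<N. a^k) * norm (1 - a)"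
    unfolding e using norm_triangle_ineq4[of 1 "a^N"] norm_triangle_ineq2[of 1 "a^N"] by simp_all
qed

lemma cSUP_less_if_bounded:
  fixes f :: "'a \<Rightarrow> real"
  assumes "K \<noteq> {}" and "\<And>w. w \<in> K \<Longrightarrow> f w \<le> M" and "M < c"
  shows "(SUP w\<in>K. f w) < c"
  using cSUP_least[of K f M] assms by fastforce

text \<open>Where \<open>|B| \<le> s < 1\<close>, the quotient \<open>A / (1 - B)\<close> is the uniform limit of the
  polynomials \<open>A (1 + B + \<dots> + B\<^sup>N\<^sup>-\<^sup>1)\<close>.\<close>

lemma poly_fun_separates_quotient:
  fixes A B :: "(nat \<Rightarrow> complex) \<Rightarrow> complex"
  assumes "A \<in> poly_fun n" "B \<in> poly_fun n" "K \<noteq> {}" "s < 1"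
    and K: "\<And>w. w \<in> K \<Longrightarrow> norm (B w) \<le> s \<and> norm (A w) \<le> norm (1 - B w)"
    and y: "norm (B y) \<le> s" "norm (1 - B y) < norm (A y)"
  shows "\<exists>P\<in>poly_fun n. (SUP w\<in>K. norm (P w)) < norm (P y)"
proof -
  define L where "L = norm (A y) / norm (1 - B y)"
  have "B y \<noteq> 1" using y assms(4) by auto
  then have L: "1 < L" "norm (A y) = L * norm (1 - B y)" using y(2) by (auto simp: L_def)
  have "0 \<le> s" using y(1) norm_ge_zero order_trans by blast
  then obtain N where N: "s^N < (L - 1) / (L + 1)"
    using real_arch_pow_inv[of "(L - 1) / (L + 1)" s] L(1) assms(4) by auto
  define P where "P w = A w * (\<Sum>k<N. B w ^ k)" for w
  have "P \<in> poly_fun n"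
    unfolding P_def using assms(1,2) by (intro poly_fun.mult poly_fun_sum poly_fun_power) auto
  moreover have "(SUP w\<in>K. norm (P w)) < norm (P y)"
  proof (rule cSUP_less_if_bounded[OF assms(3)])
    fix w assume "w \<in> K"
    with K have "norm (P w) \<le> norm (1 - B w) * norm (\<Sum>k<N. B w ^ k)"
      by (simp add: P_def norm_mult mult_right_mono)
    also have "\<dots> \<le> 1 + s^N"
      using norm_geometric_sum_mult_bounds(1)[of "B w" s N] K \<open>w \<in> K\<close> assms(4)
      by (simp add: mult.commute)
    finally show "norm (P w) \<le> 1 + s^N" .
  next
    have "1 + s^N < L * (1 - s^N)" using N L(1) by (simp add: field_simps)
    also have "\<dots> \<le> L * (norm (\<Sum>k<N. B y ^ k) * norm (1 - B y))"
      using norm_geometric_sum_mult_bounds(2)[OF y(1) assms(4)] L(1) by simp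
    also have "\<dots> = norm (P y)" by (simp add: P_def norm_mult L(2) mult_ac)
    finally show "1 + s^N < norm (P y)" .
  qed
  ultimately show ?thesis by blast
qed

lemma poly_fun_separates_from_Gamma_cond:
  assumes "1 \<le> n" and "K \<noteq> {}" and K: "\<And>w. w \<in> K \<Longrightarrow> Gamma_cond n w" and y: "\<not> Gamma_cond n y"
  shows "\<exists>P\<in>poly_fun n. (SUP w\<in>K. norm (P w)) < norm (P y)"
proof -
  have var: "(\<lambda>w. w i) \<in> poly_fun n" if "i \<in> {1..n}" for i
    using that by (rule poly_fun.var)
  have coord: "\<exists>P\<in>poly_fun n. (SUP w\<in>K. norm (P w)) < norm (P y)"
    if "i \<in> {1..n}" "\<And>w. w \<in> K \<Longrightarrow> norm (w i) \<le> M" "M < norm (y i)" for i M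
  proof (rule bexI)
    show "(SUP w\<in>K. norm (w i)) < norm (y i)"
      using assms(2) that(2,3) by (rule cSUP_less_if_bounded)
  qed (rule var[OF that(1)])
  consider "1 < norm (y n)" | j where "j \<in> {1..n-1}" "real (n choose j) < norm (y j)"
    | "norm (y n) \<le> 1" "\<forall>j\<in>{1..n-1}. norm (y j) \<le> real (n choose j)"
    using not_le by blast
  then show ?thesis
  proof cases
    case 1
    have "norm (w n) \<le> 1" if "w \<in> K" for w
      using K[OF that] unfolding Gamma_cond_def by simp
    then show ?thesis using coord[of n 1] 1 assms(1) by simp
  next
    case (2 j)
    then show ?thesis using coord[of j "real (n choose j)"] Gamma_cond_coord_bound[OF K] by auto
  next
    case 3
    then obtain j z where j: "j \<in> {1..n-1}" and z: "norm z < 1"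
      and viol: "norm (1 - y (n - j) / of_nat (n choose j) * z) < norm (y n * z - y j / of_nat (n choose j))"
      using y unfolding Gamma_cond_def disc_dominated_def by (auto simp: not_le)
    note J = complement_index[OF j]
    have B: "norm (w (n - j) / of_nat (n choose j) * z) \<le> norm z"
      if "norm (w (n - j)) \<le> real (n choose j)" for w :: "nat \<Rightarrow> complex"
    proof -
      have "norm (w (n - j) / of_nat (n choose j)) \<le> 1"
        using that J(6) by (simp add: norm_divide divide_le_eq_1)
      then show ?thesis by (metis mult_left_le_one_le norm_ge_zero norm_mult)
    qed
    show ?thesis
    proof (rule poly_fun_separates_quotient[OF _ _ assms(2) z])
      show "(\<lambda>w. w n * z - w j / of_nat (n choose j)) \<in> poly_fun n"
        using j assms(1)
        by (intro poly_fun_diff poly_fun.mult poly_fun_divide_const poly_fun.const var) auto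
      show "(\<lambda>w. w (n - j) / of_nat (n choose j) * z) \<in> poly_fun n"
        using J(1) by (intro poly_fun.mult poly_fun_divide_const poly_fun.const var) auto
      show "norm (y (n - j) / of_nat (n choose j) * z) \<le> norm z"
        using 3 J(1,3) B by metis
      fix w assume "w \<in> K"
      then have w: "Gamma_cond n w" by (rule K)
      have "norm (w (n - j)) \<le> real (n choose j)"
        using Gamma_cond_coord_bound[OF w J(1)] J(3) by simp
      moreover have "norm (w n * z - w j / of_nat (n choose j)) \<le> norm (1 - w (n - j) / of_nat (n choose j) * z)"
        using w j z unfolding Gamma_cond_def disc_dominated_def by blast
      ultimately show "norm (w (n - j) / of_nat (n choose j) * z) \<le> norm z \<and>
          norm (w n * z - w j / of_nat (n choose j)) \<le> norm (1 - w (n - j) / of_nat (n choose j) * z)"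
        using B by blast
    qed (rule viol)
  qed
qed

theorem mainTheorem5:
  fixes n :: nat
  assumes "n \<ge> 2"
  shows "polynomially_convex n (Gamma_tilde n)"
proof -
  have "Gamma_tilde n \<noteq> {}"
    using zero_in_G_tilde closure_subset unfolding Gamma_tilde_def by blast
  then have "\<exists>P\<in>poly_fun n. (SUP w\<in>Gamma_tilde n. norm (P w)) < norm (P y)"
    if "y \<in> Cn n - Gamma_tilde n" for y
    using that assms by (intro poly_fun_separates_from_Gamma_cond) (auto simp: Gamma_tilde_eq)
  then show ?thesis
    unfolding polynomially_convex_def using compact_Gamma_tilde by (auto simp: Gamma_tilde_eq)
qed

end
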